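(* For odd $N\ge3$, let $K=\tilde F(N)$, $L=N(N+1)$, $n=N$, let $C^0,\dots,C^{K-1}$ be the sequences $c^m_i=\omega_{N+1}^{\pi_m(\langle i\rangle_N)\cdot i}$ ($0\le i<L$) built from a $K\times N$ circular Florentine rectangle with rows $\pi_0,\dots,\pi_{K-1}$, let $\theta_{\max}$ be their maximum periodic correlation magnitude (over all autocorrelations at shifts $0<\tau<L$ and all cross-correlations between distinct sequences at shifts $0\le\tau<L$), and let $\theta_{opti}=L\sqrt{\frac{(K-1)L+n}{(L-n)(KL-1)}}$. Then $\theta_{\max}/\theta_{opti}\to1$ as $N\to\infty$ through each of the following sets of integers: (1) $N=p$ an odd prime; (2) $N=p(p+k)$ where $k$ is a fixed positive integer and $p$, $p+k$ are odd primes; (3) $N=\prod_{i=1}^h(m+k_i)$, where $\mathcal{H}=\{k_1,\dots,k_h\}$ is a fixed admissible set of distinct nonnegative integers and $m+k_1,\dots,m+k_h$ are odd primes.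
   Context: $\omega_n=e^{2\pi\sqrt{-1}/n}$. An $M\times N$ circular Florentine rectangle (CFR) over $\mathbb{Z}_N$ is an $M\times N$ array whose rows $\pi_i:\mathbb{Z}_N\to\mathbb{Z}_N$ are permutations such that for every $m\in\mathbb{Z}_N\setminus\{0\}$ and all $i,j,x,y$: $(\pi_i(x),\pi_i(x+m))=(\pi_j(y),\pi_j(y+m))$ (indices mod $N$) iff $i=j$ and $x=y$. $\tilde F(N)$ is the largest $M$ for which an $M\times N$ CFR exists. Periodic correlation: $\theta_{C,D}(\tau)=\sum_{t=0}^{L-1}c_td^*_{\langle t+\tau\rangle_L}$. A finite set $\mathcal{H}$ of integers is admissible if for every prime $q$ the elements of $\mathcal{H}$ do not cover all residue classes modulo $q$. *)

theory Defs
  imports "HOL-Analysis.Analysis" "HOL-Computational_Algebra.Primes"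
begin

definition omega :: "nat \<Rightarrow> complex" where
  "omega n = exp (2 * of_real pi * \<i> / of_nat n)"

definition cfr :: "nat \<Rightarrow> nat \<Rightarrow> (nat \<Rightarrow> nat \<Rightarrow> nat) \<Rightarrow> bool" where
  "cfr M N \<pi> \<longleftrightarrow>
     (\<forall>i<M. bij_betw (\<pi> i) {..<N} {..<N}) \<and>
     (\<forall>m\<in>{1..<N}. \<forall>i<M. \<forall>j<M. \<forall>x<N. \<forall>y<N.
        ((\<pi> i x, \<pi> i ((x + m) mod N)) = (\<pi> j y, \<pi> j ((y + m) mod N))
          \<longleftrightarrow> (i = j \<and> x = y)))"

definition cfr_max :: "nat \<Rightarrow> nat" where
  "cfr_max N = Max {M. \<exists>\<pi>. cfr M N \<pi>}"

definition pcorr :: "nat \<Rightarrow> (nat \<Rightarrow> complex) \<Rightarrow> (nat \<Rightarrow> complex) \<Rightarrow> nat \<Rightarrow> complex" where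
  "pcorr L C D \<tau> = (\<Sum>t<L. C t * cnj (D ((t + \<tau>) mod L)))"

definition cfr_seq :: "nat \<Rightarrow> (nat \<Rightarrow> nat \<Rightarrow> nat) \<Rightarrow> nat \<Rightarrow> nat \<Rightarrow> complex" where
  "cfr_seq N \<pi> m i = omega (N + 1) ^ (\<pi> m (i mod N) * i)"

definition theta_max :: "nat \<Rightarrow> nat \<Rightarrow> (nat \<Rightarrow> nat \<Rightarrow> nat) \<Rightarrow> real" where
  "theta_max N K \<pi> = (let L = N * (N + 1) in
     Max ({cmod (pcorr L (cfr_seq N \<pi> m) (cfr_seq N \<pi> m) \<tau>) | m \<tau>. m < K \<and> 0 < \<tau> \<and> \<tau> < L}
        \<union> {cmod (pcorr L (cfr_seq N \<pi> m) (cfr_seq N \<pi> m') \<tau>) | m m' \<tau>.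
              m < K \<and> m' < K \<and> m \<noteq> m' \<and> \<tau> < L}))"

definition theta_opti :: "nat \<Rightarrow> nat \<Rightarrow> nat \<Rightarrow> real" where
  "theta_opti K L n = real L * sqrt (((real K - 1) * real L + real n) /
                                     ((real L - real n) * (real K * real L - 1)))"

text \<open>theta_max / theta_opti \<rightarrow> 1 as N \<rightarrow> \<infinity> through S, for every choice of
  F(N) x N CFR (uniformly, which is equivalent since there are finitely many).\<close>
definition ratio_tends_to_1 :: "nat set \<Rightarrow> bool" where
  "ratio_tends_to_1 S \<longleftrightarrow>
     (\<forall>\<epsilon>>0. \<exists>N0. \<forall>N\<in>S. N \<ge> N0 \<longrightarrow>
        (\<forall>\<pi>. cfr (cfr_max N) N \<pi> \<longrightarrow>
           \<bar>theta_max N (cfr_max N) \<pi> / theta_opti (cfr_max N) (N * (N + 1)) N - 1\<bar> < \<epsilon>))"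

definition admissible :: "nat set \<Rightarrow> bool" where
  "admissible H \<longleftrightarrow> finite H \<and>
     (\<forall>q::nat. prime q \<longrightarrow> \<not> (\<forall>r<q. \<exists>k\<in>H. k mod q = r))"

end

theory Submission
  imports Defs "HOL-Number_Theory.Cong"
begin

(* Write the time index as t = a + s N with a < N and s <= N.  In the correlation of the sequences
   of rows m and m' at shift tau, the sum over s is a geometric sum of (N+1)-th roots of unity with
   ratio a power of omega (N+1) whose exponent is (pi_m a - pi_m' (a + tau)) N; as N and N + 1 are
   coprime and the entries are below N, it vanishes unless pi_m a = pi_m' (a + tau), and otherwise
   it is N + 1 times a root of unity.  For distinct rows the Florentine property allows at most one
   such coincidence; a row meets itself only when N divides tau, and then the remaining sum runs over
   all but one of the (N+1)-th roots of unity, so it has modulus 1.  Hence theta_max = N + 1 exactly,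
   and comparing with theta_opti gives |theta_max / theta_opti - 1| <= 1 / (K - 1).  It remains to
   see K = F(N) -> infinity: the rows x |-> (i + 1) x mod N with i + 1 below the least prime factor
   of N form a CFR, and in all three families the least prime factor of N tends to infinity. *)

lemma omega_powi: "omega n powi k = cis (2 * pi * of_int k / of_nat n)"
proof -
  have "omega n = cis (2 * pi / of_nat n)"
    by (simp add: omega_def cis_conv_exp mult_ac)
  thus ?thesis by (simp add: cis_power_int mult_ac)
qed

lemma norm_omega_powi [simp]: "norm (omega n powi k) = 1"
  by (simp add: omega_powi)

lemma cnj_omega_powi: "cnj (omega n powi k) = omega n powi (- k)"
  by (simp add: omega_powi cis_cnj)

lemma omega_powi_add: "omega n powi (a + b) = omega n powi a * omega n powi b"
  by (simp add: power_int_add omega_def)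

lemma omega_powi_eq_1_iff:
  assumes "n > 0" shows "omega n powi k = 1 \<longleftrightarrow> int n dvd k"
proof
  assume "omega n powi k = 1"
  hence "cos (2 * pi * of_int k / of_nat n) = 1"
    unfolding omega_powi by (metis cis.sel(1) one_complex.sel(1))
  then obtain j :: int where "2 * pi * of_int k / of_nat n = of_int j * 2 * pi"
    using cos_one_2pi_int by blast
  hence "real_of_int k = real_of_int (j * int n)"
    using assms by (simp add: field_simps)
  thus "int n dvd k" by (simp only: of_int_eq_iff) simp
next
  assume "int n dvd k"
  then obtain j where "k = int n * j" by blast
  hence "2 * pi * of_int k / of_nat n = 2 * pi * of_int j"
    using assms by simp
  thus "omega n powi k = 1"
    unfolding omega_powi by (metis Ints_of_int cis_multiple_2pi)
qed

lemma omega_powi_cong: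
  assumes "n > 0" and "[a = b] (mod int n)"
  shows "omega n powi a = omega n powi b"
proof -
  have "int n dvd a - b" using assms(2) by (simp add: cong_iff_dvd_diff)
  hence "omega n powi (a - b) = 1" using omega_powi_eq_1_iff[OF assms(1)] by blast
  thus ?thesis using omega_powi_add[of n "a - b" b] by simp
qed

lemma sum_omega_powi_lessThan:
  assumes "n > 0"
  shows "(\<Sum>s<n. omega n powi (c * int s)) = (if int n dvd c then of_nat n else 0)"
proof (cases "int n dvd c")
  case True
  hence "omega n powi (c * int s) = 1" for s
    using omega_powi_eq_1_iff[OF assms] by simp
  thus ?thesis using True by simp
next
  case False
  define z where "z = omega n powi c"
  have "z \<noteq> 1" using False omega_powi_eq_1_iff[OF assms] unfolding z_def by blast
  moreover have "z ^ n = 1"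
    using omega_powi_eq_1_iff[OF assms, of "c * int n"] unfolding z_def
    by (simp add: power_int_mult flip: power_int_of_nat)
  ultimately have "(\<Sum>s<n. z ^ s) = 0" by (simp add: geometric_sum)
  thus ?thesis using False unfolding z_def by (simp add: power_int_mult flip: power_int_of_nat)
qed

lemma norm_sum_omega_powi_lessThan_pred:
  assumes "n > 0" and "\<not> int n dvd c"
  shows "norm (\<Sum>s<n - 1. omega n powi (c * int s)) = 1"
proof -
  have "(\<Sum>s<n - 1. omega n powi (c * int s)) + omega n powi (c * int (n - 1)) = 0"
    using sum_omega_powi_lessThan[OF assms(1), of c] assms
    by (metis (no_types, lifting) Suc_diff_1 sum.lessThan_Suc)
  hence "(\<Sum>s<n - 1. omega n powi (c * int s)) = - (omega n powi (c * int (n - 1)))"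
    by (simp add: eq_neg_iff_add_eq_0)
  thus ?thesis by simp
qed

lemma cfr_seq_pcorr_term:
  "cfr_seq N \<pi> m t * cnj (cfr_seq N \<pi> m' ((t + \<tau>) mod (N * (N + 1))))
     = omega (N + 1) powi (int (\<pi> m (t mod N)) * int t - int (\<pi> m' ((t + \<tau>) mod N)) * (int t + int \<tau>))"
proof -
  define t' where "t' = (t + \<tau>) mod (N * (N + 1))"
  have "t' mod N = (t + \<tau>) mod N" and "[t' = t + \<tau>] (mod N + 1)"
    unfolding t'_def cong_def by (simp_all add: mod_mod_cancel del: mult_Suc_right)
  hence "t' mod N = (t + \<tau>) mod N" and "[int t' = int t + int \<tau>] (mod int (N + 1))"
    by (simp_all flip: cong_int_iff)
  hence "omega (N + 1) powi (- (int (\<pi> m' (t' mod N)) * int t'))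
      = omega (N + 1) powi (- (int (\<pi> m' ((t + \<tau>) mod N)) * (int t + int \<tau>)))"
    by (intro omega_powi_cong) (simp_all add: cong_minus_minus_iff cong_scalar_left)
  moreover have "cfr_seq N \<pi> i x = omega (N + 1) powi (int (\<pi> i (x mod N)) * int x)" for i x
    by (simp add: cfr_seq_def flip: power_int_of_nat)
  ultimately show ?thesis
    unfolding t'_def[symmetric]
    by (simp add: cnj_omega_powi del: complex_cnj_power_int flip: omega_powi_add)
qed

lemma sum_omega_powi_residue_class:
  assumes "u \<le> N" and "v \<le> N"
  shows "(\<Sum>s<N + 1. omega (N + 1) powi (int u * int (a + s * N) - int v * (int (a + s * N) + int \<tau>)))
       = (if u = v then of_nat (N + 1) * omega (N + 1) powi (- (int u * int \<tau>)) else 0)"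
proof -
  define c where "c = (int u - int v) * int N"
  define e where "e = int u * int a - int v * (int a + int \<tau>)"
  have "int u * int (a + s * N) - int v * (int (a + s * N) + int \<tau>) = e + c * int s" for s
    unfolding c_def e_def by (simp add: algebra_simps)
  hence "(\<Sum>s<N + 1. omega (N + 1) powi (int u * int (a + s * N) - int v * (int (a + s * N) + int \<tau>)))
       = omega (N + 1) powi e * (\<Sum>s<N + 1. omega (N + 1) powi (c * int s))"
    by (simp add: omega_powi_add sum_distrib_left del: sum.lessThan_Suc)
  also have "\<dots> = omega (N + 1) powi e * (if int (N + 1) dvd c then of_nat (N + 1) else 0)"
    by (subst sum_omega_powi_lessThan) simp_all
  finally have sum_eq: "(\<Sum>s<N + 1. omega (N + 1) powi (int u * int (a + s * N) - int v * (int (a + s * N) + int \<tau>)))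
       = omega (N + 1) powi e * (if int (N + 1) dvd c then of_nat (N + 1) else 0)" .
  have dvd_iff: "int (N + 1) dvd c \<longleftrightarrow> u = v"
  proof
    assume "int (N + 1) dvd c"
    moreover have "coprime (int (N + 1)) (int N)"
      by (simp only: coprime_int_iff) simp
    ultimately have "int (N + 1) dvd int u - int v"
      unfolding c_def using coprime_dvd_mult_left_iff by blast
    moreover have "\<bar>int u - int v\<bar> < int (N + 1)" using assms by auto
    ultimately show "u = v" using dvd_imp_le_int[of "int u - int v" "int (N + 1)"] by linarith
  qed (simp add: c_def)
  show ?thesis
  proof (cases "u = v")
    case True
    hence "e = - (int u * int \<tau>)" unfolding e_def by (simp add: algebra_simps)
    thus ?thesis using sum_eq dvd_iff True by (simp only: if_True) (simp add: mult.commute)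
  qed (simp only: sum_eq dvd_iff if_False mult_zero_right)
qed

lemma pcorr_cfr_seq:
  assumes "\<And>a. a < N \<Longrightarrow> \<pi> m a < N" and "\<And>a. a < N \<Longrightarrow> \<pi> m' a < N"
  shows "pcorr (N * (N + 1)) (cfr_seq N \<pi> m) (cfr_seq N \<pi> m') \<tau>
       = of_nat (N + 1) * (\<Sum>a | a < N \<and> \<pi> m a = \<pi> m' ((a + \<tau>) mod N).
                             omega (N + 1) powi (- (int (\<pi> m a) * int \<tau>)))"
proof -
  define E where "E t = int (\<pi> m (t mod N)) * int t - int (\<pi> m' ((t + \<tau>) mod N)) * (int t + int \<tau>)" for t
  define G where "G a = (if \<pi> m a = \<pi> m' ((a + \<tau>) mod N)
                         then of_nat (N + 1) * omega (N + 1) powi (- (int (\<pi> m a) * int \<tau>)) else 0)" for a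
  have "pcorr (N * (N + 1)) (cfr_seq N \<pi> m) (cfr_seq N \<pi> m') \<tau> = (\<Sum>t<(N + 1) * N. omega (N + 1) powi E t)"
    unfolding pcorr_def E_def cfr_seq_pcorr_term mult.commute[of "N + 1" N] ..
  also have "\<dots> = (\<Sum>s<N + 1. \<Sum>a<N. omega (N + 1) powi E (a + s * N))"
    by (rule sum_mult_product)
  also have "\<dots> = (\<Sum>a<N. \<Sum>s<N + 1. omega (N + 1) powi E (a + s * N))"
    by (rule sum.swap)
  also have "\<dots> = (\<Sum>a<N. G a)"
  proof (rule sum.cong[OF refl])
    fix a assume "a \<in> {..<N}"
    hence "E (a + s * N) = int (\<pi> m a) * int (a + s * N)
                           - int (\<pi> m' ((a + \<tau>) mod N)) * (int (a + s * N) + int \<tau>)" for s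
      using mod_mult_self1[of "a + \<tau>" s N] unfolding E_def by (simp add: ac_simps)
    hence "(\<Sum>s<N + 1. omega (N + 1) powi E (a + s * N))
         = (\<Sum>s<N + 1. omega (N + 1) powi (int (\<pi> m a) * int (a + s * N)
                           - int (\<pi> m' ((a + \<tau>) mod N)) * (int (a + s * N) + int \<tau>)))"
      by (simp only:)
    also have "\<dots> = G a"
    proof -
      have "(a + \<tau>) mod N < N" using \<open>a \<in> {..<N}\<close> by simp
      thus ?thesis
        unfolding G_def using assms \<open>a \<in> {..<N}\<close>
        by (intro sum_omega_powi_residue_class) (simp_all add: less_imp_le)
    qed
    finally show "(\<Sum>s<N + 1. omega (N + 1) powi E (a + s * N)) = G a" .
  qed
  also have "\<dots> = of_nat (N + 1) * (\<Sum>a | a < N \<and> \<pi> m a = \<pi> m' ((a + \<tau>) mod N).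
                             omega (N + 1) powi (- (int (\<pi> m a) * int \<tau>)))"
    unfolding G_def sum.If_cases[OF finite_lessThan] sum_distrib_left
    by (simp add: Collect_conj_eq lessThan_def Int_commute)
  finally show ?thesis .
qed

lemma cfr_row_bij: "cfr K N \<pi> \<Longrightarrow> m < K \<Longrightarrow> bij_betw (\<pi> m) {..<N} {..<N}"
  unfolding cfr_def by blast

lemma cfr_row_less: "cfr K N \<pi> \<Longrightarrow> m < K \<Longrightarrow> a < N \<Longrightarrow> \<pi> m a < N"
  using bij_betw_apply[OF cfr_row_bij] by blast

lemma cfr_cross_coincidence_unique:
  assumes cfr: "cfr K N \<pi>" and rows: "m < K" "m' < K" "m \<noteq> m'"
    and a: "a < N" "\<pi> m a = \<pi> m' ((a + \<tau>) mod N)"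
    and b: "b < N" "\<pi> m b = \<pi> m' ((b + \<tau>) mod N)"
  shows "a = b"
proof (rule ccontr)
  assume "a \<noteq> b"
  \<comment> \<open>the shift s carries the coincidence at a to the one at b, so rows m and m' share a pair at distance s\<close>
  define s where "s = (b + (N - a)) mod N"
  have shift_a: "(a + s) mod N = b"
  proof -
    have "(a + s) mod N = (a + (b + (N - a))) mod N" unfolding s_def by (simp add: mod_add_right_eq)
    also have "a + (b + (N - a)) = b + N" using a by simp
    finally show ?thesis using b by simp
  qed
  have shift_a\<tau>: "((a + \<tau>) mod N + s) mod N = (b + \<tau>) mod N"
  proof -
    have "((a + \<tau>) mod N + s) mod N = (a + \<tau> + (b + (N - a))) mod N" unfolding s_def by (simp add: mod_add_eq)
    also have "a + \<tau> + (b + (N - a)) = (b + \<tau>) + N" using a by simp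
    finally show ?thesis by simp
  qed
  have "s \<in> {1..<N}"
    using shift_a \<open>a \<noteq> b\<close> a by (cases "s = 0") (auto simp: s_def)
  moreover have "(\<pi> m a, \<pi> m ((a + s) mod N)) = (\<pi> m' ((a + \<tau>) mod N), \<pi> m' (((a + \<tau>) mod N + s) mod N))"
    using a b shift_a shift_a\<tau> by simp
  moreover have "(a + \<tau>) mod N < N" using a by simp
  ultimately have "m = m'" using cfr rows a unfolding cfr_def by blast
  thus False using rows by simp
qed

lemma card_cfr_coincidences_le_1:
  assumes cfr: "cfr K N \<pi>" and rows: "m < K" "m' < K" and not_trivial: "\<not> (m = m' \<and> N dvd \<tau>)"
  shows "card {a. a < N \<and> \<pi> m a = \<pi> m' ((a + \<tau>) mod N)} \<le> 1"
proof -
  have "a = b" if "a \<in> {a. a < N \<and> \<pi> m a = \<pi> m' ((a + \<tau>) mod N)}"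
    and "b \<in> {a. a < N \<and> \<pi> m a = \<pi> m' ((a + \<tau>) mod N)}" for a b
  proof (cases "m = m'")
    case True
    have "(a + \<tau>) mod N < N" using that by simp
    hence "(a + \<tau>) mod N = a"
      using that True bij_betw_imp_inj_on[OF cfr_row_bij[OF cfr rows(1)]] by (auto simp: inj_on_def)
    hence "[a + \<tau> = a + 0] (mod N)" using that by (simp add: cong_def)
    hence "N dvd \<tau>" by (simp only: cong_add_lcancel_nat cong_0_iff)
    thus ?thesis using True not_trivial by simp
  next
    case False
    thus ?thesis using cfr_cross_coincidence_unique[OF cfr rows False] that by blast
  qed
  thus ?thesis by (simp add: card_le_Suc0_iff_eq)
qed

lemma cmod_pcorr_cfr_seq_shift_multiple:
  assumes cfr: "cfr K N \<pi>" and row: "m < K" and \<tau>: "0 < \<tau>" "\<tau> < N * (N + 1)" "N dvd \<tau>"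
  shows "cmod (pcorr (N * (N + 1)) (cfr_seq N \<pi> m) (cfr_seq N \<pi> m) \<tau>) = real N + 1"
proof -
  have shift: "(a + \<tau>) mod N = a" if "a < N" for a
    using that \<tau>(3) by (simp add: mod_add_right_eq[symmetric])
  have "\<not> int (N + 1) dvd - int \<tau>"
  proof
    assume "int (N + 1) dvd - int \<tau>"
    hence "N + 1 dvd \<tau>" by (simp only: dvd_minus_iff int_dvd_int_iff)
    hence "N * (N + 1) dvd \<tau>" using \<tau>(3) by (simp add: divides_mult del: mult_Suc_right)
    thus False using \<tau> by (auto dest: dvd_imp_le)
  qed
  hence unit: "norm (\<Sum>c<N. omega (N + 1) powi (- int \<tau> * int c)) = 1"
    using norm_sum_omega_powi_lessThan_pred[of "N + 1" "- int \<tau>"] by simp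
  have "pcorr (N * (N + 1)) (cfr_seq N \<pi> m) (cfr_seq N \<pi> m) \<tau>
      = of_nat (N + 1) * (\<Sum>a | a < N \<and> \<pi> m a = \<pi> m ((a + \<tau>) mod N).
                             omega (N + 1) powi (- (int (\<pi> m a) * int \<tau>)))"
    by (rule pcorr_cfr_seq; rule cfr_row_less[OF cfr row])
  also have "(\<Sum>a | a < N \<and> \<pi> m a = \<pi> m ((a + \<tau>) mod N). omega (N + 1) powi (- (int (\<pi> m a) * int \<tau>)))
      = (\<Sum>a<N. omega (N + 1) powi (- int \<tau> * int (\<pi> m a)))"
    using shift by (intro sum.cong) (auto simp: mult.commute)
  also have "\<dots> = (\<Sum>c<N. omega (N + 1) powi (- int \<tau> * int c))"
    by (rule sum.reindex_bij_betw[OF cfr_row_bij[OF cfr row]])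
  finally show ?thesis by (simp only: norm_mult norm_of_nat unit) simp
qed

lemma cmod_pcorr_cfr_seq_le:
  assumes cfr: "cfr K N \<pi>" and rows: "m < K" "m' < K"
    and \<tau>: "m = m' \<Longrightarrow> 0 < \<tau> \<and> \<tau> < N * (N + 1)"
  shows "cmod (pcorr (N * (N + 1)) (cfr_seq N \<pi> m) (cfr_seq N \<pi> m') \<tau>) \<le> real N + 1"
proof (cases "m = m' \<and> N dvd \<tau>")
  case True
  thus ?thesis using cmod_pcorr_cfr_seq_shift_multiple[OF cfr rows(1)] \<tau> by simp
next
  case False
  define S where "S = {a. a < N \<and> \<pi> m a = \<pi> m' ((a + \<tau>) mod N)}"
  have "norm (\<Sum>a\<in>S. omega (N + 1) powi (- (int (\<pi> m a) * int \<tau>)))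
      \<le> (\<Sum>a\<in>S. norm (omega (N + 1) powi (- (int (\<pi> m a) * int \<tau>))))"
    by (rule norm_sum)
  also have "\<dots> = real (card S)" by simp
  also have "\<dots> \<le> 1"
    using card_cfr_coincidences_le_1[OF cfr rows False] unfolding S_def by simp
  finally have bound: "norm (\<Sum>a\<in>S. omega (N + 1) powi (- (int (\<pi> m a) * int \<tau>))) \<le> 1" .
  have eq: "pcorr (N * (N + 1)) (cfr_seq N \<pi> m) (cfr_seq N \<pi> m') \<tau>
      = of_nat (N + 1) * (\<Sum>a\<in>S. omega (N + 1) powi (- (int (\<pi> m a) * int \<tau>)))"
    unfolding S_def by (rule pcorr_cfr_seq; rule cfr_row_less[OF cfr]) (use rows in simp_all)
  have "cmod (pcorr (N * (N + 1)) (cfr_seq N \<pi> m) (cfr_seq N \<pi> m') \<tau>)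
      = (real N + 1) * norm (\<Sum>a\<in>S. omega (N + 1) powi (- (int (\<pi> m a) * int \<tau>)))"
    unfolding eq norm_mult norm_of_nat by simp
  also have "\<dots> \<le> real N + 1" using bound by (intro mult_left_le) auto
  finally show ?thesis .
qed

lemma theta_max_cfr:
  assumes cfr: "cfr K N \<pi>" and "0 < K" and "0 < N"
  shows "theta_max N K \<pi> = real N + 1"
proof -
  define L where "L = N * (N + 1)"
  define A where "A = {cmod (pcorr L (cfr_seq N \<pi> m) (cfr_seq N \<pi> m) \<tau>) | m \<tau>. m < K \<and> 0 < \<tau> \<and> \<tau> < L}"
  define B where "B = {cmod (pcorr L (cfr_seq N \<pi> m) (cfr_seq N \<pi> m') \<tau>) | m m' \<tau>.
                        m < K \<and> m' < K \<and> m \<noteq> m' \<and> \<tau> < L}"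
  have "A \<subseteq> (\<lambda>(m, \<tau>). cmod (pcorr L (cfr_seq N \<pi> m) (cfr_seq N \<pi> m) \<tau>)) ` ({..<K} \<times> {..<L})"
    unfolding A_def by auto
  moreover have "B \<subseteq> (\<lambda>(m, m', \<tau>). cmod (pcorr L (cfr_seq N \<pi> m) (cfr_seq N \<pi> m') \<tau>))
                         ` ({..<K} \<times> {..<K} \<times> {..<L})"
    unfolding B_def by force
  ultimately have "finite (A \<union> B)" by (auto intro: finite_subset)
  moreover have "y \<le> real N + 1" if "y \<in> A \<union> B" for y
    using that unfolding A_def B_def
    by (elim UnE CollectE exE conjE) (auto intro!: cmod_pcorr_cfr_seq_le[OF cfr, folded L_def])
  moreover have "real N + 1 \<in> A"
  proof -
    have "cmod (pcorr L (cfr_seq N \<pi> 0) (cfr_seq N \<pi> 0) N) = real N + 1"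
      unfolding L_def by (rule cmod_pcorr_cfr_seq_shift_multiple[OF cfr \<open>0 < K\<close>]) (use \<open>0 < N\<close> in simp_all)
    moreover have "N < L" using \<open>0 < N\<close> unfolding L_def by simp
    ultimately show ?thesis
      unfolding A_def using \<open>0 < K\<close> \<open>0 < N\<close> by (intro CollectI exI[of _ 0] exI[of _ N]) simp
  qed
  ultimately have "Max (A \<union> B) = real N + 1" by (intro Max_eqI) auto
  thus ?thesis unfolding theta_max_def Let_def A_def B_def L_def .
qed

lemma cfr_rows_le:
  assumes cfr: "cfr M N \<pi>" and "2 \<le> N"
  shows "M \<le> N"
proof -
  define h where "h = (\<lambda>(i, x). (\<pi> i x, \<pi> i ((x + 1) mod N)))"
  have "(1::nat) \<in> {1..<N}" using \<open>2 \<le> N\<close> by simp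
  hence "\<forall>i<M. \<forall>j<M. \<forall>x<N. \<forall>y<N. h (i, x) = h (j, y) \<longleftrightarrow> i = j \<and> x = y"
    unfolding h_def case_prod_conv by (rule cfr[unfolded cfr_def, THEN conjunct2, THEN bspec])
  hence "inj_on h ({..<M} \<times> {..<N})" by (intro inj_onI) auto
  moreover have "h ` ({..<M} \<times> {..<N}) \<subseteq> {..<N} \<times> {..<N}"
    unfolding h_def using cfr_row_less[OF cfr] \<open>2 \<le> N\<close> by auto
  ultimately have "card ({..<M} \<times> {..<N}) \<le> card ({..<N} \<times> {..<N})"
    by (intro card_inj_on_le) auto
  thus ?thesis using \<open>2 \<le> N\<close> by (simp add: card_cartesian_product)
qed

lemma bij_betw_mult_mod:
  fixes c N :: nat
  assumes "coprime c N"
  shows "bij_betw (\<lambda>x. c * x mod N) {..<N} {..<N}"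
proof -
  have "inj_on (\<lambda>x. c * x mod N) {..<N}"
    using cong_mult_lcancel_nat[OF assms] by (intro inj_onI) (simp add: cong_def)
  moreover have "(\<lambda>x. c * x mod N) ` {..<N} \<subseteq> {..<N}" by auto
  ultimately show ?thesis by (simp add: bij_betw_def endo_inj_surj)
qed

lemma cfr_mult_rows:
  assumes small_coprime: "\<And>d. 0 < d \<Longrightarrow> d < P \<Longrightarrow> coprime d N"
  shows "cfr (P - 1) N (\<lambda>i x. Suc i * x mod N)"
  unfolding cfr_def
proof (intro conjI allI impI ballI)
  fix i assume "i < P - 1"
  thus "bij_betw (\<lambda>x. Suc i * x mod N) {..<N} {..<N}"
    by (intro bij_betw_mult_mod small_coprime) simp_all
next
  fix m i j x y assume m: "m \<in> {1..<N}" and i: "i < P - 1" and j: "j < P - 1" and "x < N" "y < N"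
  show "(Suc i * x mod N, Suc i * ((x + m) mod N) mod N) = (Suc j * y mod N, Suc j * ((y + m) mod N) mod N)
        \<longleftrightarrow> i = j \<and> x = y"
  proof
    assume "(Suc i * x mod N, Suc i * ((x + m) mod N) mod N) = (Suc j * y mod N, Suc j * ((y + m) mod N) mod N)"
    hence first: "[Suc i * x = Suc j * y] (mod N)" and "[Suc i * (x + m) = Suc j * (y + m)] (mod N)"
      by (simp_all only: prod.inject cong_def mod_mult_right_eq)
    hence "[int (Suc i) * int x = int (Suc j) * int y] (mod int N)"
      and "[int (Suc i) * (int x + int m) = int (Suc j) * (int y + int m)] (mod int N)"
      by (simp_all only: of_nat_mult[symmetric] of_nat_add[symmetric] cong_int_iff)
    hence "[int (Suc i) * (int x + int m) - int (Suc i) * int x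
           = int (Suc j) * (int y + int m) - int (Suc j) * int y] (mod int N)"
      by (intro cong_diff)
    hence "int N dvd (int i - int j) * int m"
      by (simp add: cong_iff_dvd_diff algebra_simps)
    have "i = j"
    proof (rule ccontr)
      assume "i \<noteq> j"
      have "coprime (nat \<bar>int i - int j\<bar>) N"
        using \<open>i \<noteq> j\<close> i j by (intro small_coprime) auto
      hence "coprime (int i - int j) (int N)"
        by (simp flip: coprime_int_iff)
      with \<open>int N dvd (int i - int j) * int m\<close> have "N dvd m"
        by (simp add: coprime_dvd_mult_right_iff coprime_commute)
      thus False using m by (auto dest: dvd_imp_le)
    qed
    moreover have "inj_on (\<lambda>x. Suc i * x mod N) {..<N}"
      using i by (intro bij_betw_imp_inj_on[OF bij_betw_mult_mod] small_coprime) simp_all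
    hence "x = y"
      using first \<open>i = j\<close> \<open>x < N\<close> \<open>y < N\<close> unfolding inj_on_def cong_def by blast
    ultimately show "i = j \<and> x = y" ..
  qed simp
qed

lemma cfr_max_ge:
  assumes "2 \<le> N" and "\<And>d. 0 < d \<Longrightarrow> d < P \<Longrightarrow> coprime d N"
  shows "P - 1 \<le> cfr_max N"
proof -
  have "{M. \<exists>\<pi>. cfr M N \<pi>} \<subseteq> {..N}" using cfr_rows_le[OF _ assms(1)] by auto
  hence "finite {M. \<exists>\<pi>. cfr M N \<pi>}" by (rule finite_subset) simp
  moreover have "P - 1 \<in> {M. \<exists>\<pi>. cfr M N \<pi>}" using cfr_mult_rows[OF assms(2)] by blast
  ultimately show ?thesis unfolding cfr_max_def by (rule Max_ge)
qed

lemma abs_ratio_theta_opti_le: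
  assumes "0 < N" and "2 \<le> K"
  shows "\<bar>(real N + 1) / theta_opti K (N * (N + 1)) N - 1\<bar> \<le> 1 / (real K - 1)"
proof -
  define n k where "n = real N" and "k = real K"
  define X Y where "X = k * n * (n + 1) - n\<^sup>2" and "Y = k * n * (n + 1) - 1"
  have n: "1 \<le> n" and k: "2 \<le> k" using assms unfolding n_def k_def by auto
  have "n\<^sup>2 \<le> n * (n + 1)" using n by (simp add: power2_eq_square distrib_left)
  also have "n * (n + 1) < k * n * (n + 1)" using n k by simp
  finally have X_pos: "0 < X" unfolding X_def by simp
  have "X \<le> Y" using n unfolding X_def Y_def by (simp add: one_le_power)
  have "theta_opti K (N * (N + 1)) N = n * (n + 1) * sqrt (X / (n\<^sup>2 * Y))"
    unfolding theta_opti_def X_def Y_def n_def k_def by (simp add: algebra_simps power2_eq_square)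
  also have "\<dots> = (n + 1) * sqrt (X / Y)"
    using n by (simp add: real_sqrt_divide real_sqrt_mult)
  finally have "(real N + 1) / theta_opti K (N * (N + 1)) N = sqrt (Y / X)"
    using X_pos \<open>X \<le> Y\<close> n unfolding n_def[symmetric] by (simp add: real_sqrt_divide)
  moreover have "1 \<le> sqrt (Y / X)" using X_pos \<open>X \<le> Y\<close> by simp
  moreover have "sqrt (Y / X) - 1 \<le> 1 / (k - 1)"
  proof -
    define t where "t = sqrt (Y / X)"
    have "1 \<le> t" using X_pos \<open>X \<le> Y\<close> unfolding t_def by simp
    hence "t - 1 \<le> t\<^sup>2 - 1" by (simp add: power2_eq_square)
    also have "t\<^sup>2 - 1 = (n\<^sup>2 - 1) / X"
      using X_pos \<open>X \<le> Y\<close> unfolding t_def by (simp add: field_simps X_def Y_def)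
    also have "\<dots> \<le> 1 / (k - 1)"
    proof -
      have "0 \<le> k * n" using n k by simp
      hence "(n\<^sup>2 - 1) * (k - 1) \<le> X"
        unfolding X_def using k by (simp add: algebra_simps power2_eq_square)
      thus ?thesis using X_pos k by (simp add: divide_simps)
    qed
    finally show ?thesis unfolding t_def .
  qed
  ultimately show ?thesis unfolding k_def by simp
qed

lemma ratio_tends_to_1_if_no_small_factors:
  assumes "\<And>B. \<exists>N0. \<forall>N\<in>S. N0 \<le> N \<longrightarrow> 2 \<le> N \<and> (\<forall>d. 0 < d \<longrightarrow> d < B \<longrightarrow> coprime d N)"
  shows "ratio_tends_to_1 S"
  unfolding ratio_tends_to_1_def
proof (intro allI impI)
  fix \<epsilon> :: real assume "0 < \<epsilon>"
  obtain B :: nat where B: "1 / \<epsilon> + 2 < real B" using reals_Archimedean2 by blast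
  obtain N0 where N0: "\<forall>N\<in>S. N0 \<le> N \<longrightarrow> 2 \<le> N \<and> (\<forall>d. 0 < d \<longrightarrow> d < B \<longrightarrow> coprime d N)"
    using assms by blast
  show "\<exists>N0. \<forall>N\<in>S. N0 \<le> N \<longrightarrow> (\<forall>\<pi>. cfr (cfr_max N) N \<pi> \<longrightarrow>
          \<bar>theta_max N (cfr_max N) \<pi> / theta_opti (cfr_max N) (N * (N + 1)) N - 1\<bar> < \<epsilon>)"
  proof (intro exI[of _ N0] ballI impI allI)
    fix N \<pi> assume "N \<in> S" "N0 \<le> N" and cfr: "cfr (cfr_max N) N \<pi>"
    hence "2 \<le> N" and "B - 1 \<le> cfr_max N" using N0 cfr_max_ge by auto
    have "0 < 1 / \<epsilon>" using \<open>0 < \<epsilon>\<close> by simp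
    hence "2 < B" using B by linarith
    hence K: "1 / \<epsilon> < real (cfr_max N) - 1" and "2 \<le> cfr_max N"
      using B \<open>B - 1 \<le> cfr_max N\<close> by (simp_all add: of_nat_diff le_diff_conv)
    have "theta_max N (cfr_max N) \<pi> = real N + 1"
      using theta_max_cfr[OF cfr] \<open>2 \<le> N\<close> \<open>2 \<le> cfr_max N\<close> by simp
    hence "\<bar>theta_max N (cfr_max N) \<pi> / theta_opti (cfr_max N) (N * (N + 1)) N - 1\<bar>
        \<le> 1 / (real (cfr_max N) - 1)"
      using abs_ratio_theta_opti_le \<open>2 \<le> N\<close> \<open>2 \<le> cfr_max N\<close> by simp
    also have "\<dots> < \<epsilon>"
    proof -
      have "0 < real (cfr_max N) - 1" using K \<open>0 < 1 / \<epsilon>\<close> by linarith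
      thus ?thesis using K \<open>0 < \<epsilon>\<close> by (simp add: field_simps)
    qed
    finally show "\<bar>theta_max N (cfr_max N) \<pi> / theta_opti (cfr_max N) (N * (N + 1)) N - 1\<bar> < \<epsilon>" .
  qed
qed

lemma prime_tuple_products_no_small_factors:
  fixes H :: "nat set" and B :: nat
  assumes "finite H"
  obtains N0 where "\<And>m. \<forall>j\<in>H. prime (m + j) \<Longrightarrow> N0 \<le> (\<Prod>j\<in>H. m + j) \<Longrightarrow>
                     2 \<le> (\<Prod>j\<in>H. m + j) \<and> (\<forall>d. 0 < d \<longrightarrow> d < B \<longrightarrow> coprime d (\<Prod>j\<in>H. m + j))"
proof
  fix m assume primes: "\<forall>j\<in>H. prime (m + j)" and large: "(B + Max H) ^ card H + 2 \<le> (\<Prod>j\<in>H. m + j)"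
  have "B \<le> m"
  proof (rule ccontr)
    assume "\<not> B \<le> m"
    hence "m + j \<le> B + Max H" if "j \<in> H" for j
      using Max_ge[OF assms that] by simp
    hence "(\<Prod>j\<in>H. m + j) \<le> (B + Max H) ^ card H"
      using prod_mono[of H "\<lambda>j. m + j" "\<lambda>_. B + Max H"] by simp
    thus False using large by simp
  qed
  have "coprime d (m + j)" if "0 < d" "d < B" "j \<in> H" for d j
  proof -
    have "\<not> m + j dvd d" using that \<open>B \<le> m\<close> by (auto dest: dvd_imp_le)
    thus ?thesis using prime_imp_coprime[of "m + j" d] primes that(3) by (simp add: coprime_commute)
  qed
  thus "2 \<le> (\<Prod>j\<in>H. m + j) \<and> (\<forall>d. 0 < d \<longrightarrow> d < B \<longrightarrow> coprime d (\<Prod>j\<in>H. m + j))"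
    using large by (auto intro: prod_coprime_right)
qed

lemma ratio_tends_to_1_prime_tuples:
  fixes H :: "nat set"
  assumes "finite H" and "S \<subseteq> {\<Prod>j\<in>H. m + j | m. \<forall>j\<in>H. prime (m + j)}"
  shows "ratio_tends_to_1 S"
proof (rule ratio_tends_to_1_if_no_small_factors)
  fix B
  obtain N0 where "\<And>m. \<forall>j\<in>H. prime (m + j) \<Longrightarrow> N0 \<le> (\<Prod>j\<in>H. m + j) \<Longrightarrow>
                     2 \<le> (\<Prod>j\<in>H. m + j) \<and> (\<forall>d. 0 < d \<longrightarrow> d < B \<longrightarrow> coprime d (\<Prod>j\<in>H. m + j))"
    using prime_tuple_products_no_small_factors[OF assms(1)] by blast
  thus "\<exists>N0. \<forall>N\<in>S. N0 \<le> N \<longrightarrow> 2 \<le> N \<and> (\<forall>d. 0 < d \<longrightarrow> d < B \<longrightarrow> coprime d N)"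
    using assms(2) by blast
qed

theorem corollary1:
  fixes k :: nat and H :: "nat set"
  assumes "k > 0" and "admissible H"
  shows "ratio_tends_to_1 {p. prime p \<and> odd p}
       \<and> ratio_tends_to_1 {p * (p + k) | p. prime p \<and> prime (p + k) \<and> odd p \<and> odd (p + k)}
       \<and> ratio_tends_to_1 {\<Prod>j\<in>H. (m + j) | m. \<forall>j\<in>H. prime (m + j) \<and> odd (m + j)}"
proof (intro conjI)
  \<comment> \<open>admissibility of H only matters for the third set to be infinite; the limit just needs H finite\<close>
  show "ratio_tends_to_1 {p. prime p \<and> odd p}"
    by (rule ratio_tends_to_1_prime_tuples[of "{0}"]) auto
  show "ratio_tends_to_1 {p * (p + k) | p. prime p \<and> prime (p + k) \<and> odd p \<and> odd (p + k)}"
    by (rule ratio_tends_to_1_prime_tuples[of "{0, k}"]) (use \<open>k > 0\<close> in auto)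
  show "ratio_tends_to_1 {\<Prod>j\<in>H. (m + j) | m. \<forall>j\<in>H. prime (m + j) \<and> odd (m + j)}"
    using \<open>admissible H\<close> unfolding admissible_def by (intro ratio_tends_to_1_prime_tuples) auto
qed

end
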